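(* Let $(\mathcal T_r)_{r\in\mathbb Z}$ be any generalized Tribonacci sequence. Then for every integer $r$ and every non-negative integer $k$: \[ 103\sum_{j=0}^k56^j\mathcal T_{r+16+17j}=56^{k+1}\mathcal T_{r+17k+17}-\mathcal T_r, \] \[ 56\sum_{j=0}^k(-1)^j103^j\mathcal T_{r+17+16j}=\mathcal T_r-(-103)^{k+1}\mathcal T_{r+16k+16}, \] \[ \sum_{j=0}^k103^{k-j}56^j\mathcal T_{r-16+j}=-103^{k+1}\mathcal T_r+56^{k+1}\mathcal T_{r+k+1}. \]
   Context: A generalized Tribonacci sequence is a two-sided sequence $(\mathcal T_r)_{r\in\mathbb Z}$ of complex numbers with $\mathcal T_r=\mathcal T_{r-1}+\mathcal T_{r-2}+\mathcal T_{r-3}$ for all $r\in\mathbb Z$. *)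

theory Defs
  imports Complex_Main
begin

definition gen_tribonacci :: "(int \<Rightarrow> complex) \<Rightarrow> bool" where
  "gen_tribonacci T \<longleftrightarrow> (\<forall>r::int. T r = T (r - 1) + T (r - 2) + T (r - 3))"

end

theory Submission
  imports Defs
begin

text \<open>
  Every generalized Tribonacci sequence is a linear combination of three consecutive terms with
  Tribonacci-number coefficients; evaluating these coefficients shows that
  \<open>T n + 103 T (n + 16) = 56 T (n + 17)\<close> for all \<open>n\<close>, i.e. \<open>56 x\<^sup>1\<^sup>7 - 103 x\<^sup>1\<^sup>6 - 1\<close> is a multiple
  of the characteristic polynomial \<open>x\<^sup>3 - x\<^sup>2 - x - 1\<close>. Read along the progressions with steps
  17, 16 and 1, this three-term identity telescopes into each of the three sums.
\<close>

fun trib :: "nat \<Rightarrow> int" where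
  "trib 0 = 0"
| "trib (Suc 0) = 0"
| "trib (Suc (Suc 0)) = 1"
| "trib (Suc (Suc (Suc n))) = trib n + trib (Suc n) + trib (Suc (Suc n))"

lemma gen_tribonacci_step:
  assumes "gen_tribonacci T"
  shows "T (n + 3) = T (n + 2) + T (n + 1) + T n"
proof -
  have "T (n + 3) = T (n + 3 - 1) + T (n + 3 - 2) + T (n + 3 - 3)"
    using assms unfolding gen_tribonacci_def by blast
  then show ?thesis
    by (simp add: add.commute add.left_commute)
qed

lemma gen_tribonacci_expand:
  assumes "gen_tribonacci T"
  shows "T (n + int m + 2) = of_int (trib (m + 2)) * T (n + 2)
           + of_int (trib (m + 1) + trib m) * T (n + 1) + of_int (trib (m + 1)) * T n"
proof (induction m rule: trib.induct)
  case 1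
  show ?case by simp
next
  case 2
  show ?case
    using gen_tribonacci_step[OF assms, of n] by (simp add: add.commute)
next
  case 3
  show ?case
    using gen_tribonacci_step[OF assms, of n] gen_tribonacci_step[OF assms, of "n + 1"]
    by (simp add: algebra_simps numeral_eq_Suc)
next
  case (4 m)
  have "T (n + int m + 5) = T (n + int m + 4) + T (n + int m + 3) + T (n + int m + 2)"
    using gen_tribonacci_step[OF assms, of "n + int m + 2"] by (simp add: add.assoc)
  with "4.IH" show ?case
    by (simp add: algebra_simps)
qed

lemma gen_tribonacci_103_56:
  assumes "gen_tribonacci T"
  shows "T n + 103 * T (n + 16) = 56 * T (n + 17)"
proof -
  have "T (n + 16) = 3136 * T (n + 2) + 2632 * T (n + 1) + 1705 * T n"
    using gen_tribonacci_expand[OF assms, of n 14] by (simp add: numeral_eq_Suc add.commute)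
  moreover have "T (n + 17) = 5768 * T (n + 2) + 4841 * T (n + 1) + 3136 * T n"
    using gen_tribonacci_expand[OF assms, of n 15] by (simp add: numeral_eq_Suc add.commute)
  ultimately show ?thesis
    by (simp add: algebra_simps)
qed

lemma sum_weighted_telescope:
  fixes x y :: "nat \<Rightarrow> 'a::comm_ring_1"
  assumes "\<And>j. y j = c * x (Suc j) - a * x j"
  shows "(\<Sum>j=0..k. a ^ (k - j) * c ^ j * y j) = c ^ (k + 1) * x (k + 1) - a ^ (k + 1) * x 0"
proof -
  define g where "g j = a ^ (Suc k - j) * c ^ j * x j" for j
  have "a ^ (k - j) * c ^ j * y j = g (Suc j) - g j" if "j \<le> k" for j
  proof -
    have "Suc k - j = Suc (k - j)"
      using that by simp
    then show ?thesis
      unfolding g_def assms by (simp add: algebra_simps)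
  qed
  then have "(\<Sum>j=0..k. a ^ (k - j) * c ^ j * y j) = (\<Sum>j=0..k. g (Suc j) - g j)"
    by (intro sum.cong) auto
  also have "\<dots> = g (Suc k) - g 0"
    by (rule sum_Suc_diff) simp
  finally show ?thesis
    by (simp add: g_def)
qed

lemma gen_tribonacci_sum_step17:
  assumes "gen_tribonacci T"
  shows "103 * (\<Sum>j=0..k. 56 ^ j * T (r + 16 + 17 * int j))
           = 56 ^ (k + 1) * T (r + 17 * int k + 17) - T r"
proof -
  have "103 * T (r + 16 + 17 * int j) = 56 * T (r + 17 * int (Suc j)) - 1 * T (r + 17 * int j)"
    for j
    using gen_tribonacci_103_56[OF assms, of "r + 17 * int j"] by (simp add: algebra_simps)
  from sum_weighted_telescope[of "\<lambda>j. 103 * T (r + 16 + 17 * int j)", OF this, of k]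
  show ?thesis
    by (simp add: sum_distrib_left algebra_simps)
qed

lemma gen_tribonacci_sum_step16:
  assumes "gen_tribonacci T"
  shows "56 * (\<Sum>j=0..k. (-1) ^ j * 103 ^ j * T (r + 17 + 16 * int j))
           = T r - (-103) ^ (k + 1) * T (r + 16 * int k + 16)"
proof -
  have "- 56 * T (r + 17 + 16 * int j) = - 103 * T (r + 16 * int (Suc j)) - 1 * T (r + 16 * int j)"
    for j
    using gen_tribonacci_103_56[OF assms, of "r + 16 * int j"] by (simp add: algebra_simps)
  from sum_weighted_telescope[of "\<lambda>j. - 56 * T (r + 17 + 16 * int j)", OF this, of k]
  show ?thesis
    by (simp add: sum_distrib_left sum_negf power_minus' algebra_simps)
qed

lemma gen_tribonacci_sum_step1:
  assumes "gen_tribonacci T"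
  shows "(\<Sum>j=0..k. 103 ^ (k - j) * 56 ^ j * T (r - 16 + int j))
           = - (103 ^ (k + 1)) * T r + 56 ^ (k + 1) * T (r + int k + 1)"
proof -
  have "T (r - 16 + int j) = 56 * T (r + int (Suc j)) - 103 * T (r + int j)" for j
    using gen_tribonacci_103_56[OF assms, of "r - 16 + int j"] by (simp add: algebra_simps)
  from sum_weighted_telescope[of "\<lambda>j. T (r - 16 + int j)", OF this, of k]
  show ?thesis
    by (simp add: algebra_simps)
qed

theorem mainTheorem9:
  fixes T :: "int \<Rightarrow> complex" and r :: int and k :: nat
  assumes "gen_tribonacci T"
  shows "(103 * (\<Sum>j=0..k. 56 ^ j * T (r + 16 + 17 * int j))
           = 56 ^ (k + 1) * T (r + 17 * int k + 17) - T r) \<and>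
         (56 * (\<Sum>j=0..k. (-1) ^ j * 103 ^ j * T (r + 17 + 16 * int j))
           = T r - (-103) ^ (k + 1) * T (r + 16 * int k + 16)) \<and>
         ((\<Sum>j=0..k. 103 ^ (k - j) * 56 ^ j * T (r - 16 + int j))
           = - (103 ^ (k + 1)) * T r + 56 ^ (k + 1) * T (r + int k + 1))"
  using gen_tribonacci_sum_step17[OF assms] gen_tribonacci_sum_step16[OF assms]
    gen_tribonacci_sum_step1[OF assms]
  by blast

end
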